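(* Let $f\in U^N_{\rm per}(\epsilon\mathbb Z)$ with $\langle f\rangle_X=0$, assume $0<c_\psi\le\psi\le C_\psi$ and $N/p\in\mathbb N$, and let $u$, $u^0$, $\chi$ be the solutions of the atomistic problem, the homogenized problem and the cell problem. Then the corrector $u^{\rm c}$ belongs to $U^N_{\rm per}(\epsilon\mathbb Z)$ and, with the two-scale function $w(X_i,Y_j)=\chi(X_i,Y_j)Du^0(X_i)$, \[ |\langle u^{\rm c}\rangle_X|\le\epsilon^2\frac p2\|D_Xw\|_{L^1(N,p)},\qquad |u^{\rm c}-u|_{H^1}\le\epsilon\frac{C_\psi}{c_\psi}\|D_XT_Yw\|_{L^2(N)}. \]
   Context: Let $\epsilon>0$ and $N,p$ positive integers; $X_i=\epsilon i$, $Y_j=j$. $U^N_{\rm per}(\epsilon\mathbb Z)$: functions $u:\epsilon\mathbb Z\to\mathbb R$ with $u(X_{i+N})=u(X_i)$; $U^N_\#(\epsilon\mathbb Z)$: those with $\langle u\rangle_X:=\frac1N\sum_{i=1}^Nu(X_i)=0$. $\langle u,v\rangle_X=\frac1N\sum_{i=1}^Nu(X_i)v(X_i)$, $Du(X_i)=(u(X_{i+1})-u(X_i))/\epsilon$, $|u|_{H^1}=(\frac1N\sum_{i=1}^N|Du(X_i)|^2)^{1/2}$. Two-scale functions $g:\epsilon\mathbb Z\times\mathbb Z\to\mathbb R$ satisfy $g(X_{i+N},Y_j)=g(X_i,Y_j)=g(X_i,Y_{j+p})$; $D_Xg(X_i,Y_j)=(g(X_{i+1},Y_j)-g(X_i,Y_j))/\epsilon$,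 $D_Yg(X_i,Y_j)=g(X_i,Y_{j+1})-g(X_i,Y_j)$, $T_Yg(X_i,Y_j)=g(X_i,Y_{j+1})$, $\langle g\rangle_Y(X_i)=\frac1p\sum_{j=1}^pg(X_i,Y_j)$, $\|g\|_{L^1(N,p)}=\frac1{Np}\sum_{i=1}^N\sum_{j=1}^p|g(X_i,Y_j)|$, and $\|g\|_{L^2(N)}=(\frac1N\sum_{i=1}^N|g(X_i,Y_i)|^2)^{1/2}$ (norm of the restriction to the diagonal $Y=X/\epsilon$). $\psi$ is a two-scale function; $\psi^\epsilon(X_i)=\psi(X_i,X_i/\epsilon)$; $\psi^0(X_i)=\langle1/\psi(X_i,\cdot)\rangle_Y^{-1}$. Cell problem: $\chi$ two-scale with $\langle\chi(X_i,\cdot)\rangle_Y=0$ and $-D_Y(\psi D_Y\chi)=D_Y\psi$ everywhere. Atomistic problem: $u\in U^N_\#(\epsilon\mathbb Z)$ with $\langle\psi^\epsilon Du,Dv\rangle_X=\langle f,v\rangle_X$ for all $v\in U^N_{\rm per}(\epsilon\mathbb Z)$. Homogenized problem: $u^0\in U^N_\#(\epsilon\mathbb Z)$ with $\langle\psi^0Du^0,Dv\rangle_X=\langle f,v\rangle_X$ for all $v\in U^N_{\rm per}(\epsilon\mathbb Z)$. Corrector: $u^{\rm c}(X_i)=u^0(X_i)+\epsilon\chi(X_i,X_i/\epsilon)Du^0(X_i)$. *)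

theory Defs
  imports Complex_Main
begin

(* Lattice functions u : eps*Z -> R are represented as  u :: int => real  with
   u i = u(X_i), X_i = eps*i.  Two-scale functions g : eps*Z x Z -> R are
   represented as  g :: int => int => real  with  g i j = g(X_i, Y_j), Y_j = j. *)

definition per :: "nat \<Rightarrow> (int \<Rightarrow> real) \<Rightarrow> bool" where
  "per N u \<longleftrightarrow> (\<forall>i. u (i + int N) = u i)"

definition avgX :: "nat \<Rightarrow> (int \<Rightarrow> real) \<Rightarrow> real" where
  "avgX N u = (\<Sum>i\<in>{1..int N}. u i) / real N"

definition ipX :: "nat \<Rightarrow> (int \<Rightarrow> real) \<Rightarrow> (int \<Rightarrow> real) \<Rightarrow> real" where
  "ipX N u v = (\<Sum>i\<in>{1..int N}. u i * v i) / real N"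

definition Dd :: "real \<Rightarrow> (int \<Rightarrow> real) \<Rightarrow> int \<Rightarrow> real" where
  "Dd eps u i = (u (i + 1) - u i) / eps"

definition H1semi :: "real \<Rightarrow> nat \<Rightarrow> (int \<Rightarrow> real) \<Rightarrow> real" where
  "H1semi eps N u = sqrt ((\<Sum>i\<in>{1..int N}. (Dd eps u i)\<^sup>2) / real N)"

definition twoscale :: "nat \<Rightarrow> nat \<Rightarrow> (int \<Rightarrow> int \<Rightarrow> real) \<Rightarrow> bool" where
  "twoscale N p g \<longleftrightarrow> (\<forall>i j. g (i + int N) j = g i j \<and> g i (j + int p) = g i j)"

definition DX :: "real \<Rightarrow> (int \<Rightarrow> int \<Rightarrow> real) \<Rightarrow> int \<Rightarrow> int \<Rightarrow> real" where
  "DX eps g i j = (g (i + 1) j - g i j) / eps"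

definition DY :: "(int \<Rightarrow> int \<Rightarrow> real) \<Rightarrow> int \<Rightarrow> int \<Rightarrow> real" where
  "DY g i j = g i (j + 1) - g i j"

definition TY :: "(int \<Rightarrow> int \<Rightarrow> real) \<Rightarrow> int \<Rightarrow> int \<Rightarrow> real" where
  "TY g i j = g i (j + 1)"

definition avgY :: "nat \<Rightarrow> (int \<Rightarrow> int \<Rightarrow> real) \<Rightarrow> int \<Rightarrow> real" where
  "avgY p g i = (\<Sum>j\<in>{1..int p}. g i j) / real p"

definition L1Np :: "nat \<Rightarrow> nat \<Rightarrow> (int \<Rightarrow> int \<Rightarrow> real) \<Rightarrow> real" where
  "L1Np N p g = (\<Sum>i\<in>{1..int N}. \<Sum>j\<in>{1..int p}. \<bar>g i j\<bar>) / (real N * real p)"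

(* norm of the restriction to the diagonal Y = X/eps, i.e. Y_i at X_i *)
definition L2N :: "nat \<Rightarrow> (int \<Rightarrow> int \<Rightarrow> real) \<Rightarrow> real" where
  "L2N N g = sqrt ((\<Sum>i\<in>{1..int N}. (g i i)\<^sup>2) / real N)"

(* psi^eps(X_i) = psi(X_i, X_i/eps) = psi(X_i, Y_i) *)
definition osc :: "(int \<Rightarrow> int \<Rightarrow> real) \<Rightarrow> int \<Rightarrow> real" where
  "osc g i = g i i"

definition hom_coeff :: "nat \<Rightarrow> (int \<Rightarrow> int \<Rightarrow> real) \<Rightarrow> int \<Rightarrow> real" where
  "hom_coeff p psi i = 1 / avgY p (\<lambda>i j. 1 / psi i j) i"

definition cell_problem :: "nat \<Rightarrow> nat \<Rightarrow> (int \<Rightarrow> int \<Rightarrow> real) \<Rightarrow> (int \<Rightarrow> int \<Rightarrow> real) \<Rightarrow> bool" where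
  "cell_problem N p psi chi \<longleftrightarrow> twoscale N p chi \<and> (\<forall>i. avgY p chi i = 0) \<and>
     (\<forall>i j. - DY (\<lambda>i j. psi i j * DY chi i j) i j = DY psi i j)"

definition atomistic_sol :: "real \<Rightarrow> nat \<Rightarrow> (int \<Rightarrow> real) \<Rightarrow> (int \<Rightarrow> real) \<Rightarrow> (int \<Rightarrow> real) \<Rightarrow> bool" where
  "atomistic_sol eps N a f u \<longleftrightarrow> per N u \<and> avgX N u = 0 \<and>
     (\<forall>v. per N v \<longrightarrow> ipX N (\<lambda>i. a i * Dd eps u i) (Dd eps v) = ipX N f v)"

definition corrector :: "real \<Rightarrow> (int \<Rightarrow> int \<Rightarrow> real) \<Rightarrow> (int \<Rightarrow> real) \<Rightarrow> int \<Rightarrow> real" where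
  "corrector eps chi u0 i = u0 i + eps * chi i i * Dd eps u0 i"

end

theory Submission
  imports Defs "HOL-Analysis.Convex"
begin

(* The corrector is N-periodic because chi is periodic in both variables and p divides N.

   Mean: w = chi Du0 has zero mean over each fast period, so the p shifted diagonal sums
   sum_i w(i - k, i), 0 <= k < p, add up to zero, and so do their translates by p in X.
   Subtracting both from 2p times the diagonal sum compares each w(i, i) with the endpoints
   of an X-window of length p containing i; bounding this by the variation of w(., i) over
   the window counts every X-difference of w exactly p times.

   Energy: the cell problem makes the flux psi (1 + D_Y chi) constant in Y, hence equal to
   psi0. So psi^eps D(uc - u) = psi0 Du0 - psi^eps Du + eps psi^eps D_X T_Y w on the diagonal;
   testing both weak formulations with uc - u removes the first two terms, and Cauchy-Schwarz
   with c_psi <= psi <= C_psi gives the H1 bound. *)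

lemma periodic_add_mult:
  fixes h :: "int \<Rightarrow> 'a"
  assumes "\<And>x. h (x + n) = h x"
  shows "h (x + k * n) = h x"
proof (induction k rule: int_induct[where k = 0])
  case (step1 k)
  then show ?case using assms[of "x + k * n"] by (simp add: algebra_simps)
next
  case (step2 k)
  then show ?case using assms[of "x + (k - 1) * n"] by (simp add: algebra_simps)
qed simp

lemma periodic_sum_shift:
  fixes h :: "int \<Rightarrow> 'a::cancel_comm_monoid_add"
  assumes "\<And>x. h (x + int n) = h x"
  shows "(\<Sum>i\<in>{1..int n}. h (i + a)) = (\<Sum>i\<in>{1..int n}. h i)"
proof -
  have step: "(\<Sum>i\<in>{1..int n}. h (i + (b + 1))) = (\<Sum>i\<in>{1..int n}. h (i + b))" for b
  proof -
    have shifted: "(\<Sum>i\<in>{1..int n}. h (i + (b + 1))) = (\<Sum>i\<in>{2..int n + 1}. h (i + b))"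
      by (rule sum.reindex_bij_witness[of _ "\<lambda>i. i - 1" "\<lambda>i. i + 1"]) (auto simp: algebra_simps)
    have "{1..int n + 1} = insert 1 {2..int n + 1}" by auto
    then have drop_first: "(\<Sum>i\<in>{1..int n + 1}. h (i + b)) = h (1 + b) + (\<Sum>i\<in>{2..int n + 1}. h (i + b))"
      by simp
    have "{1..int n + 1} = insert (int n + 1) {1..int n}" by auto
    then have drop_last: "(\<Sum>i\<in>{1..int n + 1}. h (i + b)) = h (int n + 1 + b) + (\<Sum>i\<in>{1..int n}. h (i + b))"
      by simp
    have "h (int n + 1 + b) = h (1 + b)"
      using assms[of "1 + b"] by (simp add: ac_simps)
    then show ?thesis using shifted drop_first drop_last by (metis add_left_cancel)
  qed
  have "(\<Sum>i\<in>{1..int n}. h (i + a)) = (\<Sum>i\<in>{1..int n}. h (i + 0))"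
  proof (induction a rule: int_induct[where k = 0])
    case (step1 a)
    then show ?case using step[of a] by simp
  next
    case (step2 a)
    then show ?case using step[of "a - 1"] by simp
  qed simp
  then show ?thesis by simp
qed

lemma periodic_sum_window:
  fixes h :: "int \<Rightarrow> 'a::cancel_comm_monoid_add"
  assumes "\<And>x. h (x + int n) = h x"
  shows "(\<Sum>k\<in>{0..<int n}. h (m + k)) = (\<Sum>j\<in>{1..int n}. h j)"
proof -
  have "(\<Sum>k\<in>{0..<int n}. h (m + k)) = (\<Sum>j\<in>{1..int n}. h (j + (m - 1)))"
    by (rule sum.reindex_bij_witness[of _ "\<lambda>j. j - 1" "\<lambda>k. k + 1"]) (auto simp: algebra_simps)
  also have "\<dots> = (\<Sum>j\<in>{1..int n}. h j)"
    using periodic_sum_shift assms by blast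
  finally show ?thesis .
qed

lemma abs_diff_le_sum_abs_increments:
  fixes x :: "int \<Rightarrow> real"
  assumes "a \<le> b"
  shows "\<bar>x b - x a\<bar> \<le> (\<Sum>e\<in>{a..<b}. \<bar>x (e + 1) - x e\<bar>)"
  using assms
proof (induction b rule: int_ge_induct)
  case (step b)
  have "{a..<b + 1} = insert b {a..<b}" using step.hyps by auto
  then have "(\<Sum>e\<in>{a..<b + 1}. \<bar>x (e + 1) - x e\<bar>) = \<bar>x (b + 1) - x b\<bar> + (\<Sum>e\<in>{a..<b}. \<bar>x (e + 1) - x e\<bar>)"
    by simp
  then show ?case using step.IH by linarith
qed simp

lemma abs_two_sided_deviation_le_variation:
  fixes x :: "int \<Rightarrow> real"
  assumes "a \<le> b" "b \<le> a + int p"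
  shows "\<bar>2 * x b - x a - x (a + int p)\<bar> \<le> (\<Sum>t\<in>{0..<int p}. \<bar>x (a + t + 1) - x (a + t)\<bar>)"
proof -
  have "{a..<a + int p} = {a..<b} \<union> {b..<a + int p}" using assms by auto
  then have "(\<Sum>e\<in>{a..<a + int p}. \<bar>x (e + 1) - x e\<bar>)
      = (\<Sum>e\<in>{a..<b}. \<bar>x (e + 1) - x e\<bar>) + (\<Sum>e\<in>{b..<a + int p}. \<bar>x (e + 1) - x e\<bar>)"
    by (simp add: sum.union_disjoint)
  moreover have "(\<Sum>e\<in>{a..<a + int p}. \<bar>x (e + 1) - x e\<bar>) = (\<Sum>t\<in>{0..<int p}. \<bar>x (a + t + 1) - x (a + t)\<bar>)"
    by (rule sum.reindex_bij_witness[of _ "\<lambda>t. a + t" "\<lambda>e. e - a"]) (auto simp: algebra_simps)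
  moreover have "\<bar>x b - x a\<bar> \<le> (\<Sum>e\<in>{a..<b}. \<bar>x (e + 1) - x e\<bar>)"
    and "\<bar>x (a + int p) - x b\<bar> \<le> (\<Sum>e\<in>{b..<a + int p}. \<bar>x (e + 1) - x e\<bar>)"
    using abs_diff_le_sum_abs_increments assms by blast+
  ultimately show ?thesis by linarith
qed

lemma twoscale_periodic_diagonal:
  assumes "twoscale N p v" "p dvd N"
  shows "v (i + int N) (j + int N) = v i j"
proof -
  obtain q where "N = p * q" using assms(2) by blast
  then have "v i (j + int N) = v i (j + int q * int p)" by (simp add: mult.commute)
  also have "\<dots> = v i j"
    using assms(1) by (intro periodic_add_mult) (simp add: twoscale_def)
  finally show ?thesis using assms(1) by (simp add: twoscale_def)
qed

lemma sum_diagonal_shift: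
  assumes "twoscale N p v" "p dvd N"
  shows "(\<Sum>i\<in>{1..int N}. v (i - d) i) = (\<Sum>i\<in>{1..int N}. v i (i + d))"
proof -
  have "v (m + int N) (m + int N + d) = v m (m + d)" for m
    using twoscale_periodic_diagonal[OF assms, of m "m + d"] by (simp add: ac_simps)
  then have "(\<Sum>i\<in>{1..int N}. (\<lambda>m. v m (m + d)) (i + - d)) = (\<Sum>i\<in>{1..int N}. v i (i + d))"
    by (intro periodic_sum_shift) simp
  then show ?thesis by simp
qed

lemma sum_diagonal_shift_period:
  assumes "twoscale N p w" "p dvd N"
  shows "(\<Sum>i\<in>{1..int N}. w (i - k + int p) i) = (\<Sum>i\<in>{1..int N}. w (i - k) i)"
proof -
  have "(\<Sum>i\<in>{1..int N}. w (i - (k - int p)) i) = (\<Sum>i\<in>{1..int N}. w i (i + (k - int p)))"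
    by (rule sum_diagonal_shift[OF assms])
  also have "\<dots> = (\<Sum>i\<in>{1..int N}. w i (i + k))"
    using assms(1) unfolding twoscale_def by (metis add.assoc diff_add_cancel)
  also have "\<dots> = (\<Sum>i\<in>{1..int N}. w (i - k) i)"
    by (rule sum_diagonal_shift[OF assms, symmetric])
  finally show ?thesis by (simp add: algebra_simps)
qed

lemma sum_offset_diagonals:
  assumes "twoscale N p v" "p dvd N"
  shows "(\<Sum>k\<in>{0..<int p}. \<Sum>i\<in>{1..int N}. v (i - k) i) = (\<Sum>i\<in>{1..int N}. \<Sum>j\<in>{1..int p}. v i j)"
proof -
  have "(\<Sum>k\<in>{0..<int p}. \<Sum>i\<in>{1..int N}. v (i - k) i) = (\<Sum>k\<in>{0..<int p}. \<Sum>i\<in>{1..int N}. v i (i + k))"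
    using sum_diagonal_shift[OF assms] by simp
  also have "\<dots> = (\<Sum>i\<in>{1..int N}. \<Sum>k\<in>{0..<int p}. v i (i + k))"
    by (rule sum.swap)
  also have "\<dots> = (\<Sum>i\<in>{1..int N}. \<Sum>j\<in>{1..int p}. v i j)"
    using assms(1) by (intro sum.cong refl periodic_sum_window) (simp add: twoscale_def)
  finally show ?thesis .
qed

lemma sum_shifted_offset_diagonals:
  fixes v :: "int \<Rightarrow> int \<Rightarrow> real"
  assumes "twoscale N p v" "p dvd N"
  shows "(\<Sum>k\<in>{0..<int p}. \<Sum>i\<in>{1..int N}. \<Sum>t\<in>{0..<int p}. v (i - k + t) i)
    = real p * (\<Sum>i\<in>{1..int N}. \<Sum>j\<in>{1..int p}. v i j)"
proof -
  have shifted: "twoscale N p (\<lambda>i j. v (i + t) j)" for t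
  proof -
    have "v (i + t + int N) j = v (i + t) j" and "v (i + t) (j + int p) = v (i + t) j" for i j
      using assms(1) by (simp_all add: twoscale_def)
    then show ?thesis by (simp add: twoscale_def ac_simps)
  qed
  have "(\<Sum>k\<in>{0..<int p}. \<Sum>i\<in>{1..int N}. \<Sum>t\<in>{0..<int p}. v (i - k + t) i)
      = (\<Sum>k\<in>{0..<int p}. \<Sum>t\<in>{0..<int p}. \<Sum>i\<in>{1..int N}. v (i - k + t) i)"
    by (intro sum.cong refl sum.swap)
  also have "\<dots> = (\<Sum>t\<in>{0..<int p}. \<Sum>k\<in>{0..<int p}. \<Sum>i\<in>{1..int N}. v (i - k + t) i)"
    by (rule sum.swap)
  also have "\<dots> = (\<Sum>t\<in>{0..<int p}. \<Sum>i\<in>{1..int N}. \<Sum>j\<in>{1..int p}. v (i + t) j)"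
    using sum_offset_diagonals[OF shifted assms(2)] by (simp add: algebra_simps)
  also have "\<dots> = (\<Sum>t\<in>{0..<int p}. \<Sum>i\<in>{1..int N}. \<Sum>j\<in>{1..int p}. v i j)"
    using assms(1) by (intro sum.cong refl periodic_sum_shift) (simp add: twoscale_def)
  finally show ?thesis by simp
qed

lemma abs_sum_diagonal_le_half_variation:
  fixes w :: "int \<Rightarrow> int \<Rightarrow> real"
  assumes w: "twoscale N p w" and "p dvd N" and "p > 0"
    and mean_zero: "\<And>i. (\<Sum>j\<in>{1..int p}. w i j) = 0"
  shows "\<bar>\<Sum>i\<in>{1..int N}. w i i\<bar> \<le> (\<Sum>i\<in>{1..int N}. \<Sum>j\<in>{1..int p}. \<bar>w (i + 1) j - w i j\<bar>) / 2"
proof -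
  define I where "I = {1..int N}"
  define K where "K = {0..<int p}"
  define D where "D e j = \<bar>w (e + 1) j - w e j\<bar>" for e j
  have offsets: "(\<Sum>k\<in>K. \<Sum>i\<in>I. w (i - k) i) = 0"
    using sum_offset_diagonals[OF w \<open>p dvd N\<close>] mean_zero by (simp add: I_def K_def)
  have offsets_p: "(\<Sum>k\<in>K. \<Sum>i\<in>I. w (i - k + int p) i) = 0"
    using offsets sum_diagonal_shift_period[OF w \<open>p dvd N\<close>] by (simp add: I_def)
  have twice_diagonal: "2 * real p * (\<Sum>i\<in>I. w i i) = (\<Sum>k\<in>K. \<Sum>i\<in>I. 2 * w i i - w (i - k) i - w (i - k + int p) i)"
    using offsets offsets_p by (simp add: sum_subtractf sum_distrib_left K_def mult_ac)
  have "2 * real p * \<bar>\<Sum>i\<in>I. w i i\<bar>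
      = \<bar>\<Sum>k\<in>K. \<Sum>i\<in>I. 2 * w i i - w (i - k) i - w (i - k + int p) i\<bar>"
    by (simp add: abs_mult flip: twice_diagonal)
  also have "\<dots> \<le> (\<Sum>k\<in>K. \<Sum>i\<in>I. \<bar>2 * w i i - w (i - k) i - w (i - k + int p) i\<bar>)"
    by (rule order_trans[OF sum_abs sum_mono[OF sum_abs]])
  also have "\<dots> \<le> (\<Sum>k\<in>K. \<Sum>i\<in>I. \<Sum>t\<in>K. D (i - k + t) i)"
  proof (intro sum_mono)
    fix k i assume "k \<in> K"
    then show "\<bar>2 * w i i - w (i - k) i - w (i - k + int p) i\<bar> \<le> (\<Sum>t\<in>K. D (i - k + t) i)"
      using abs_two_sided_deviation_le_variation[of "i - k" i p "\<lambda>e. w e i"] by (simp add: K_def D_def)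
  qed
  also have "\<dots> = real p * (\<Sum>i\<in>I. \<Sum>j\<in>{1..int p}. D i j)"
  proof -
    have "w (i + 1 + int N) j = w (i + 1) j" and "w (i + int N) j = w i j"
      and "w i (j + int p) = w i j" for i j
      using w by (simp_all add: twoscale_def)
    then have "twoscale N p D"
      by (simp add: twoscale_def D_def ac_simps)
    then show ?thesis
      unfolding I_def K_def by (rule sum_shifted_offset_diagonals) fact
  qed
  finally show ?thesis using \<open>p > 0\<close> by (simp add: I_def D_def)
qed

lemma per_Dd: "per N u \<Longrightarrow> per N (Dd eps u)"
  unfolding per_def Dd_def by (metis add.commute add.left_commute)

lemma twoscale_mult_per:
  "twoscale N p chi \<Longrightarrow> per N a \<Longrightarrow> twoscale N p (\<lambda>i j. chi i j * a i)"
  by (simp add: twoscale_def per_def)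

lemma per_corrector:
  assumes "per N u0" "twoscale N p chi" "p dvd N"
  shows "per N (corrector eps chi u0)"
  using assms(1) per_Dd[OF assms(1)] twoscale_periodic_diagonal[OF assms(2,3)]
  by (simp add: per_def corrector_def)

lemma abs_avgX_corrector_le:
  assumes "eps > 0" "p > 0" "p dvd N" "per N u0" "avgX N u0 = 0"
    and chi: "twoscale N p chi" "\<And>i. avgY p chi i = 0"
  shows "\<bar>avgX N (corrector eps chi u0)\<bar>
    \<le> eps\<^sup>2 * (real p / 2) * L1Np N p (DX eps (\<lambda>i j. chi i j * Dd eps u0 i))"
proof -
  define w where "w = (\<lambda>i j. chi i j * Dd eps u0 i)"
  define T where "T = (\<Sum>i\<in>{1..int N}. \<Sum>j\<in>{1..int p}. \<bar>w (i + 1) j - w i j\<bar>)"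
  have "(\<Sum>j\<in>{1..int p}. w i j) = 0" for i
    using chi(2)[of i] \<open>p > 0\<close> by (simp add: w_def avgY_def flip: sum_distrib_right)
  then have diagonal: "\<bar>\<Sum>i\<in>{1..int N}. w i i\<bar> \<le> T / 2"
    unfolding T_def w_def
    by (intro abs_sum_diagonal_le_half_variation twoscale_mult_per chi per_Dd assms)
  have "avgX N (corrector eps chi u0) = eps * (\<Sum>i\<in>{1..int N}. w i i) / real N"
    using \<open>avgX N u0 = 0\<close>
    by (cases "N = 0") (simp_all add: avgX_def corrector_def w_def sum.distrib mult.assoc flip: sum_distrib_left)
  moreover have "eps\<^sup>2 * (real p / 2) * L1Np N p (DX eps w) = eps * (T / 2) / real N"
    using \<open>eps > 0\<close> \<open>p > 0\<close>
    by (simp add: L1Np_def DX_def T_def power2_eq_square flip: sum_divide_distrib)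
  moreover have "eps * \<bar>\<Sum>i\<in>{1..int N}. w i i\<bar> / real N \<le> eps * (T / 2) / real N"
    using diagonal \<open>eps > 0\<close> by (intro divide_right_mono mult_left_mono) auto
  ultimately have "\<bar>avgX N (corrector eps chi u0)\<bar> \<le> eps\<^sup>2 * (real p / 2) * L1Np N p (DX eps w)"
    using \<open>eps > 0\<close> by (simp add: abs_mult)
  then show ?thesis by (simp add: w_def)
qed

lemma cell_flux_eq_hom_coeff:
  assumes "p > 0" and psi_pos: "\<And>j. psi i j > 0" and cell: "cell_problem N p psi chi"
  shows "psi i j * (1 + DY chi i j) = hom_coeff p psi i"
proof -
  define flux where "flux j = psi i j * (1 + DY chi i j)" for j
  have "flux (j + 1) = flux j" for j
  proof -
    have "- DY (\<lambda>i j. psi i j * DY chi i j) i j = DY psi i j"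
      using cell by (simp add: cell_problem_def)
    then show ?thesis by (simp add: flux_def DY_def algebra_simps)
  qed
  then have flux_const: "flux j = flux 0" for j
    using periodic_add_mult[of flux 1 0 j] by simp
  have "(\<Sum>j\<in>{1..int p}. chi i (j + 1)) = (\<Sum>j\<in>{1..int p}. chi i j)"
    using cell by (intro periodic_sum_shift) (simp add: cell_problem_def twoscale_def)
  then have "(\<Sum>j\<in>{1..int p}. 1 + DY chi i j) = real p"
    by (simp add: DY_def sum.distrib sum_subtractf)
  moreover have "1 + DY chi i j = flux 0 * (1 / psi i j)" for j
    using flux_const[of j] psi_pos[of j] by (simp add: flux_def field_simps)
  ultimately have "flux 0 * (\<Sum>j\<in>{1..int p}. 1 / psi i j) = real p"
    by (simp add: sum_distrib_left)
  moreover from this have "(\<Sum>j\<in>{1..int p}. 1 / psi i j) \<noteq> 0"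
    using \<open>p > 0\<close> by auto
  ultimately have "hom_coeff p psi i = flux 0"
    by (simp add: hom_coeff_def avgY_def field_simps)
  then show ?thesis using flux_const[of j] by (simp add: flux_def)
qed

lemma Dd_corrector:
  assumes "eps \<noteq> 0"
  shows "Dd eps (corrector eps chi u0) i
    = (1 + DY chi i i) * Dd eps u0 i + eps * DX eps (TY (\<lambda>i j. chi i j * Dd eps u0 i)) i i"
  using assms by (simp add: Dd_def corrector_def DX_def TY_def DY_def field_simps)

lemma atomistic_sols_same_load:
  assumes "N > 0" "atomistic_sol eps N a f u" "atomistic_sol eps N b f v" "per N e"
  shows "(\<Sum>i\<in>{1..int N}. a i * Dd eps u i * Dd eps e i) = (\<Sum>i\<in>{1..int N}. b i * Dd eps v i * Dd eps e i)"
  using assms by (simp add: atomistic_sol_def ipX_def)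

lemma sum_sq_le_of_energy_identity:
  fixes a e g :: "'a \<Rightarrow> real"
  assumes "0 < c" and a_lower: "\<And>i. i \<in> I \<Longrightarrow> c \<le> a i" and a_upper: "\<And>i. i \<in> I \<Longrightarrow> a i \<le> C"
    and "0 \<le> eps" and energy: "(\<Sum>i\<in>I. a i * (e i)\<^sup>2) = eps * (\<Sum>i\<in>I. a i * g i * e i)"
  shows "(\<Sum>i\<in>I. (e i)\<^sup>2) \<le> (eps * (C / c))\<^sup>2 * (\<Sum>i\<in>I. (g i)\<^sup>2)"
proof -
  define A where "A = (\<Sum>i\<in>I. (e i)\<^sup>2)"
  define G where "G = (\<Sum>i\<in>I. (g i)\<^sup>2)"
  have "A \<ge> 0" "G \<ge> 0" by (simp_all add: A_def G_def sum_nonneg)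
  have "c * A \<le> (\<Sum>i\<in>I. a i * (e i)\<^sup>2)"
    unfolding A_def sum_distrib_left by (intro sum_mono mult_right_mono a_lower) auto
  then have "(c * A)\<^sup>2 \<le> eps\<^sup>2 * (\<Sum>i\<in>I. a i * g i * e i)\<^sup>2"
    using \<open>0 < c\<close> \<open>A \<ge> 0\<close> by (simp add: energy power_mono flip: power_mult_distrib)
  also have "\<dots> \<le> eps\<^sup>2 * ((\<Sum>i\<in>I. (a i * g i)\<^sup>2) * A)"
    unfolding A_def by (intro mult_left_mono Cauchy_Schwarz_ineq_sum) auto
  also have "\<dots> \<le> eps\<^sup>2 * (C\<^sup>2 * G * A)"
  proof -
    have "(a i * g i)\<^sup>2 \<le> C\<^sup>2 * (g i)\<^sup>2" if "i \<in> I" for i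
      using a_lower[OF that] a_upper[OF that] \<open>0 < c\<close>
      by (simp add: power_mult_distrib mult_right_mono power_mono)
    then have "(\<Sum>i\<in>I. (a i * g i)\<^sup>2) \<le> C\<^sup>2 * G"
      unfolding G_def sum_distrib_left by (rule sum_mono)
    then show ?thesis using \<open>A \<ge> 0\<close> by (intro mult_left_mono mult_right_mono) auto
  qed
  finally have "c\<^sup>2 * A * A \<le> (eps * (C / c))\<^sup>2 * c\<^sup>2 * G * A"
    using \<open>0 < c\<close> by (simp add: power2_eq_square field_simps)
  then have "A \<le> (eps * (C / c))\<^sup>2 * G \<or> A = 0"
    using \<open>0 < c\<close> \<open>A \<ge> 0\<close> by (auto simp: mult.commute mult.left_commute)
  then show ?thesis using \<open>G \<ge> 0\<close> by (auto simp: A_def G_def)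
qed

lemma H1semi_le_L2N:
  assumes "(\<Sum>i\<in>{1..int N}. (Dd eps u i)\<^sup>2) \<le> K\<^sup>2 * (\<Sum>i\<in>{1..int N}. (g i i)\<^sup>2)" and "0 \<le> K"
  shows "H1semi eps N u \<le> K * L2N N g"
proof -
  have "H1semi eps N u \<le> sqrt (K\<^sup>2 * ((\<Sum>i\<in>{1..int N}. (g i i)\<^sup>2) / real N))"
    using assms(1) by (simp add: H1semi_def divide_right_mono)
  also have "\<dots> = K * L2N N g"
    using assms(2) by (simp only: L2N_def real_sqrt_mult real_sqrt_abs abs_of_nonneg)
  finally show ?thesis .
qed

lemma H1semi_corrector_error_le:
  assumes "eps > 0" "N > 0" "p > 0" "p dvd N"
    and "0 < c_psi" and psi_lower: "\<And>i j. c_psi \<le> psi i j" and psi_upper: "\<And>i j. psi i j \<le> C_psi"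
    and u: "atomistic_sol eps N (osc psi) f u"
    and u0: "atomistic_sol eps N (hom_coeff p psi) f u0"
    and cell: "cell_problem N p psi chi"
  shows "H1semi eps N (\<lambda>i. corrector eps chi u0 i - u i)
    \<le> eps * (C_psi / c_psi) * L2N N (DX eps (TY (\<lambda>i j. chi i j * Dd eps u0 i)))"
proof -
  define E where "E = (\<lambda>i. corrector eps chi u0 i - u i)"
  define g where "g i = DX eps (TY (\<lambda>i j. chi i j * Dd eps u0 i)) i i" for i
  define I where "I = {1..int N}"
  have "per N E"
    using per_corrector[of N u0 p chi eps] u u0 cell \<open>p dvd N\<close>
    by (simp add: E_def per_def atomistic_sol_def cell_problem_def)
  have flux: "psi i i * Dd eps E i
      = hom_coeff p psi i * Dd eps u0 i + eps * (psi i i * g i) - psi i i * Dd eps u i" for i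
  proof -
    have hom: "psi i i * (1 + DY chi i i) = hom_coeff p psi i"
      using \<open>p > 0\<close> \<open>0 < c_psi\<close> psi_lower cell
      by (intro cell_flux_eq_hom_coeff) (auto intro: less_le_trans)
    have dE: "Dd eps E i = (1 + DY chi i i) * Dd eps u0 i + eps * g i - Dd eps u i"
      using Dd_corrector[of eps chi u0 i] \<open>eps > 0\<close> by (simp add: E_def g_def Dd_def diff_divide_distrib)
    show ?thesis unfolding dE hom[symmetric] by (simp add: algebra_simps)
  qed
  have "(\<Sum>i\<in>I. psi i i * (Dd eps E i)\<^sup>2) = (\<Sum>i\<in>I. (psi i i * Dd eps E i) * Dd eps E i)"
    by (simp add: power2_eq_square mult.assoc)
  also have "\<dots> = (\<Sum>i\<in>I. hom_coeff p psi i * Dd eps u0 i * Dd eps E i)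
      + eps * (\<Sum>i\<in>I. psi i i * g i * Dd eps E i) - (\<Sum>i\<in>I. psi i i * Dd eps u i * Dd eps E i)"
    by (simp add: flux algebra_simps sum.distrib sum_subtractf sum_distrib_left)
  also have "(\<Sum>i\<in>I. psi i i * Dd eps u i * Dd eps E i) = (\<Sum>i\<in>I. hom_coeff p psi i * Dd eps u0 i * Dd eps E i)"
    using atomistic_sols_same_load[OF \<open>N > 0\<close> u u0 \<open>per N E\<close>] by (simp add: I_def osc_def)
  finally have "(\<Sum>i\<in>I. (Dd eps E i)\<^sup>2) \<le> (eps * (C_psi / c_psi))\<^sup>2 * (\<Sum>i\<in>I. (g i)\<^sup>2)"
    using \<open>0 < c_psi\<close> \<open>eps > 0\<close> psi_lower psi_upper by (intro sum_sq_le_of_energy_identity) auto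
  moreover have "0 \<le> eps * (C_psi / c_psi)"
    using \<open>eps > 0\<close> \<open>0 < c_psi\<close> order_trans[OF psi_lower psi_upper] by simp
  ultimately show ?thesis
    unfolding E_def I_def g_def by (rule H1semi_le_L2N)
qed

theorem lemma4p4:
  fixes eps c_psi C_psi :: real and N p :: nat
    and f u u0 :: "int \<Rightarrow> real" and psi chi :: "int \<Rightarrow> int \<Rightarrow> real"
  assumes "eps > 0" and "N > 0" and "p > 0"
    and "p dvd N"
    and "twoscale N p psi"
    and "0 < c_psi" and "\<And>i j. c_psi \<le> psi i j" and "\<And>i j. psi i j \<le> C_psi"
    and "per N f" and "avgX N f = 0"
    and "atomistic_sol eps N (osc psi) f u"
    and "atomistic_sol eps N (hom_coeff p psi) f u0"
    and "cell_problem N p psi chi"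
  shows "per N (corrector eps chi u0)
    \<and> \<bar>avgX N (corrector eps chi u0)\<bar>
        \<le> eps\<^sup>2 * (real p / 2) * L1Np N p (DX eps (\<lambda>i j. chi i j * Dd eps u0 i))
    \<and> H1semi eps N (\<lambda>i. corrector eps chi u0 i - u i)
        \<le> eps * (C_psi / c_psi) * L2N N (DX eps (TY (\<lambda>i j. chi i j * Dd eps u0 i)))"
proof -
  have u0: "per N u0" "avgX N u0 = 0"
    using assms(12) by (simp_all add: atomistic_sol_def)
  have chi: "twoscale N p chi" "\<And>i. avgY p chi i = 0"
    using assms(13) by (simp_all add: cell_problem_def)
  show ?thesis
    using per_corrector[OF u0(1) chi(1) \<open>p dvd N\<close>]
      abs_avgX_corrector_le[OF \<open>eps > 0\<close> \<open>p > 0\<close> \<open>p dvd N\<close> u0 chi]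
      H1semi_corrector_error_le[OF assms(1-4,6-8,11-13)]
    by blast
qed

end
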